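(* Fix $\ell \in \{1,2\}$. If $C_{\mathcal{A}_\ell}$ is satisfied by a pointed interpretation $(\mathcal{I}, d)$ (i.e. $d \in (C_{\mathcal{A}_\ell})^{\mathcal{I}}$), then $(\mathcal{I}, d)$ is $\Sigma$-friendly and for every element $e \in \Delta^{\mathcal{I}}$ that is $\mathtt{x}^*$-reachable from $d$ via a path $\rho$ we have $e \in (\mathsf{Acc}_{\mathcal{A}_\ell})^{\mathcal{I}}$ if and only if the $\Sigma$-word represented by $\rho$ belongs to $\mathcal{L}(\mathcal{A}_\ell)$. Moreover, after reinterpreting the concept name $\mathsf{Acc}_{\mathcal{A}_\ell}$, every $\Sigma$-metaword becomes a model of $C_{\mathcal{A}_\ell}$.
   Context: Setting: the description logic $\mathcal{ALC}$ extended with path expressions $\exists \mathcal{L}.C$ / $\forall\mathcal{L}.C$ for visibly-pushdown languages $\mathcal{L}$ (given by visibly-pushdown automata) over role names, and with the Self operator, where $(\exists r.\mathsf{Self})^{\mathcal{I}} = \{ d \mid (d,d) \in r^{\mathcal{I}}\}$. A path $\rho_1\ldots\rho_{n+1}$ in $\mathcal{I}$ is an $\mathcal{L}$-path if some word $w_1\ldots w_n \in \mathcal{L}$ satisfies $(\rho_i,\rho_{i+1}) \in w_i^{\mathcal{I}}$ for all $i$; $e$ is $\mathcal{L}$-reachable from $d$ if there is an $\mathcal{L}$-path from $d$ to $e$; $(\exists\mathcal{L}.C)^{\mathcal{I}}$ is the set of elements that $\mathcal{L}$-reach an element of $C^{\mathcal{I}}$, and $\forall\mathcal{L}.C := \neg\exists\mathcal{L}.\neg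 C$. Fix a finite alphabet $\Sigma$ of role names and deterministic one-counter automata (DOCA) $\mathcal{A}_1, \mathcal{A}_2$ over $\Sigma$; let $\mathcal{C}_1, \mathcal{C}_2$ be DOCA recognizing the complements of $\mathcal{L}(\mathcal{A}_1), \mathcal{L}(\mathcal{A}_2)$. For a DOCA $\mathcal{A}$ over $\Sigma$, $\tilde{\mathcal{A}}$ denotes a visibly-pushdown automaton over the pushdown alphabet $\tilde\Sigma := (\Sigma\times\{c\},\ (\Sigma\times\{i\})\cup\{\mathtt{x}\},\ \Sigma\times\{r\})$ (call, internal, return letters; $\mathtt{x}$ a fresh internal letter, the same for all automata), such that every word in $\mathcal{L}(\tilde{\mathcal{A}})$ has the form $\tilde a_1\mathtt{x}\tilde a_2\mathtt{x}\ldots\mathtt{x}\tilde a_n$ with $\tilde a_j \in \Sigma\times\{c,i,r\}$, and $\mathcal{L}(\mathcal{A}) = \{\pi_1(\tilde a_1)\ldots\pi_1(\tilde a_n) \mid \tilde a_1\mathtt{x}\ldots\mathtt{x}\tilde a_n \in \mathcal{L}(\tilde{\mathcal{A}})\}$, where $\pi_1$ is the projection to the first component. Letters of $\tilde\Sigma$ are treated as role names. A pointed interpretation $(\mathcal{I}, d)$ is $\Sigma$-friendly if for every $e$ that is $\mathtt{x}^*$-reachable from $d$ there is a unique $a\in\Sigma$ such that $e$ carries $\tilde a$-self-loops for all $\tilde a\in\tilde\Sigma$ with $\pi_1(\tilde a)=a$, and no self-loops for all other letters of $\tilde\Sigma$ (including $\mathtt{x}$). This is axiomatised by $C_{\mathrm{fr}}^{\Sigma}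 := \forall \mathtt{x}^*. \bigsqcup_{a\in\Sigma} \sqcap_{b\in\Sigma,\, b\neq a,\, \pi_1(\tilde a)=a,\, \pi_1(\tilde b)=b} \big( \exists\tilde a.\mathsf{Self} \sqcap \neg\exists\tilde b.\mathsf{Self} \sqcap \neg\exists\mathtt{x}.\mathsf{Self}\big)$, where $\sqcap_{\ldots}$ denotes the (finite) conjunction of concepts over all indicated indices. An $\mathtt{x}^*$-path $\rho$ in a $\Sigma$-friendly $(\mathcal{I},d)$ represents the word in $\Sigma^*$ whose $i$-th letter is $a$ iff the $i$-th element of $\rho$ carries an $(a,c)$-self-loop. A $\Sigma$-metaword is a $\Sigma$-friendly $(\mathcal{I}, d)$ with domain $\{0,\ldots,n-1\}$ for some positive $n$, $\mathtt{x}^{\mathcal{I}} = \{(i,i+1) \mid 0\le i\le n-2\}$, and all other role names interpreted as $\emptyset$ or subsets of the diagonal $\{(i,i)\}$. For $\ell\in\{1,2\}$, with a fresh concept name $\mathsf{Acc}_{\mathcal{A}_\ell}$: $C_{\mathcal{A}_\ell} := C_{\mathrm{fr}}^{\Sigma} \sqcap \forall \mathcal{L}(\tilde{\mathcal{A}}_\ell).\mathsf{Acc}_{\mathcal{A}_\ell} \sqcap \forall\mathcal{L}(\tilde{\mathcal{C}}_\ell).\neg\mathsf{Acc}_{\mathcal{A}_\ell}$. *)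

theory Defs
  imports Main
begin

record ('q, 'a) doca =
  d_states :: "'q set"
  d_init   :: 'q
  d_final  :: "'q set"
  d_delta  :: "'q \<Rightarrow> 'a \<Rightarrow> bool \<Rightarrow> 'q \<times> int"

definition doca_wf :: "'a set \<Rightarrow> ('q, 'a) doca \<Rightarrow> bool" where
  "doca_wf \<Sigma> A \<longleftrightarrow> finite (d_states A) \<and> d_init A \<in> d_states A \<and> d_final A \<subseteq> d_states A \<and>
     (\<forall>q \<in> d_states A. \<forall>a \<in> \<Sigma>. \<forall>z.
        fst (d_delta A q a z) \<in> d_states A \<and> snd (d_delta A q a z) \<in> {-1, 0, 1} \<and>
        (z \<longrightarrow> snd (d_delta A q a z) \<noteq> -1))"

definition doca_step :: "('q, 'a) doca \<Rightarrow> 'a \<Rightarrow> 'q \<times> nat \<Rightarrow> 'q \<times> nat" where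
  "doca_step A a c = (let (q, n) = c; (q', k) = d_delta A q a (n = 0) in (q', nat (int n + k)))"

definition doca_lang :: "'a set \<Rightarrow> ('q, 'a) doca \<Rightarrow> 'a list set" where
  "doca_lang \<Sigma> A = {w \<in> lists \<Sigma>. fst (fold (doca_step A) w (d_init A, 0)) \<in> d_final A}"

record ('q, 'g, 'b) vpa =
  v_states :: "'q set"
  v_init   :: "'q set"
  v_final  :: "'q set"
  v_stack  :: "'g set"
  v_call   :: "('q \<times> 'b \<times> 'q \<times> 'g) set"
  v_int    :: "('q \<times> 'b \<times> 'q) set"
  v_ret    :: "('q \<times> 'b \<times> 'g option \<times> 'q) set"  \<comment> \<open>None: return on empty stack (bottom)\<close>

text \<open>A pushdown alphabet is a triple (calls, internals, returns) of pairwise disjoint sets.\<close>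

definition vpa_wf :: "'b set \<times> 'b set \<times> 'b set \<Rightarrow> ('q, 'g, 'b) vpa \<Rightarrow> bool" where
  "vpa_wf PA V \<longleftrightarrow> (case PA of (Sc, Si, Sr) \<Rightarrow>
     finite Sc \<and> finite Si \<and> finite Sr \<and>
     Sc \<inter> Si = {} \<and> Sc \<inter> Sr = {} \<and> Si \<inter> Sr = {} \<and>
     finite (v_states V) \<and> finite (v_stack V) \<and>
     v_init V \<subseteq> v_states V \<and> v_final V \<subseteq> v_states V \<and>
     v_call V \<subseteq> v_states V \<times> Sc \<times> v_states V \<times> v_stack V \<and>
     v_int V \<subseteq> v_states V \<times> Si \<times> v_states V \<and>
     v_ret V \<subseteq> v_states V \<times> Sr \<times> insert None (Some ` v_stack V) \<times> v_states V)"

fun vpa_step :: "'b set \<times> 'b set \<times> 'b set \<Rightarrow> ('q, 'g, 'b) vpa \<Rightarrow> 'b \<Rightarrow> 'q \<times> 'g list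
    \<Rightarrow> ('q \<times> 'g list) set" where
  "vpa_step (Sc, Si, Sr) V b (q, st) =
     (if b \<in> Sc then {(q', g # st) | q' g. (q, b, q', g) \<in> v_call V}
      else if b \<in> Si then {(q', st) | q'. (q, b, q') \<in> v_int V}
      else if b \<in> Sr then
        (case st of [] \<Rightarrow> {(q', []) | q'. (q, b, None, q') \<in> v_ret V}
                  | g # st' \<Rightarrow> {(q', st') | q'. (q, b, Some g, q') \<in> v_ret V})
      else {})"

definition vpa_reach :: "'b set \<times> 'b set \<times> 'b set \<Rightarrow> ('q, 'g, 'b) vpa \<Rightarrow> 'b list
    \<Rightarrow> ('q \<times> 'g list) set" where
  "vpa_reach PA V w = fold (\<lambda>b S. \<Union>c \<in> S. vpa_step PA V b c) w {(q, []) | q. q \<in> v_init V}"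

definition vpa_lang :: "'b set \<times> 'b set \<times> 'b set \<Rightarrow> ('q, 'g, 'b) vpa \<Rightarrow> 'b list set" where
  "vpa_lang PA V = {w. (\<exists>c \<in> vpa_reach PA V w. fst c \<in> v_final V)}"

datatype mode = Cm | Im | Rm

datatype 'a tl = TL 'a mode | X   \<comment> \<open>X is the fresh internal letter x\<close>

definition tSigma :: "'a set \<Rightarrow> 'a tl set \<times> 'a tl set \<times> 'a tl set" where
  "tSigma \<Sigma> = ({TL a Cm | a. a \<in> \<Sigma>}, {TL a Im | a. a \<in> \<Sigma>} \<union> {X}, {TL a Rm | a. a \<in> \<Sigma>})"

fun p1 :: "'a tl \<Rightarrow> 'a" where
  "p1 (TL a m) = a"
| "p1 X = undefined"

definition xform :: "'a set \<Rightarrow> 'a tl list \<Rightarrow> 'a tl list \<Rightarrow> bool" where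
  "xform \<Sigma> w as \<longleftrightarrow> as \<noteq> [] \<and> (\<forall>t \<in> set as. \<exists>a m. a \<in> \<Sigma> \<and> t = TL a m) \<and>
      w = concat (map (\<lambda>i. if i = 0 then [as ! i] else [X, as ! i]) [0..<length as])"

text \<open>\<open>V\<close> is a VPA \<open>\<tilde>\<A>\<close> for the language \<open>L = \<L>(\<A>)\<close> over \<open>\<Sigma>\<close>.
 (The projection equation is imposed for nonempty words.)\<close>

definition is_tilde :: "'a set \<Rightarrow> 'a list set \<Rightarrow> ('q, 'g, 'a tl) vpa \<Rightarrow> bool" where
  "is_tilde \<Sigma> L V \<longleftrightarrow> vpa_wf (tSigma \<Sigma>) V \<and>
     (\<forall>w \<in> vpa_lang (tSigma \<Sigma>) V. \<exists>as. xform \<Sigma> w as) \<and>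
     L - {[]} = {map p1 as | as w. w \<in> vpa_lang (tSigma \<Sigma>) V \<and> xform \<Sigma> w as}"

record ('d, 'c, 'r) interp =
  dom :: "'d set"
  cn  :: "'c \<Rightarrow> 'd set"
  rn  :: "'r \<Rightarrow> ('d \<times> 'd) set"

definition interp_wf :: "('d, 'c, 'r) interp \<Rightarrow> bool" where
  "interp_wf I \<longleftrightarrow> dom I \<noteq> {} \<and> (\<forall>c. cn I c \<subseteq> dom I) \<and> (\<forall>r. rn I r \<subseteq> dom I \<times> dom I)"

definition L_path :: "('d, 'c, 'r) interp \<Rightarrow> 'r list set \<Rightarrow> 'd list \<Rightarrow> bool" where
  "L_path I L \<rho> \<longleftrightarrow> \<rho> \<noteq> [] \<and> set \<rho> \<subseteq> dom I \<and>
     (\<exists>w \<in> L. length \<rho> = length w + 1 \<and> (\<forall>i < length w. (\<rho> ! i, \<rho> ! Suc i) \<in> rn I (w ! i)))"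

definition L_reach :: "('d, 'c, 'r) interp \<Rightarrow> 'r list set \<Rightarrow> 'd \<Rightarrow> 'd \<Rightarrow> bool" where
  "L_reach I L d e \<longleftrightarrow> (\<exists>\<rho>. L_path I L \<rho> \<and> hd \<rho> = d \<and> last \<rho> = e)"

definition ExL :: "('d, 'c, 'r) interp \<Rightarrow> 'r list set \<Rightarrow> 'd set \<Rightarrow> 'd set" where
  "ExL I L C = {d \<in> dom I. \<exists>e \<in> C. L_reach I L d e}"

definition AllL :: "('d, 'c, 'r) interp \<Rightarrow> 'r list set \<Rightarrow> 'd set \<Rightarrow> 'd set" where
  "AllL I L C = dom I - ExL I L (dom I - C)"

definition SelfC :: "('d, 'c, 'r) interp \<Rightarrow> 'r \<Rightarrow> 'd set" where
  "SelfC I r = {d \<in> dom I. (d, d) \<in> rn I r}"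

definition Xstar :: "'a tl list set" where
  "Xstar = {replicate k X | k. True}"

definition friendly :: "'a set \<Rightarrow> ('d, 'c, 'a tl) interp \<Rightarrow> 'd \<Rightarrow> bool" where
  "friendly \<Sigma> I d \<longleftrightarrow> (\<forall>e. L_reach I Xstar d e \<longrightarrow>
     (\<exists>!a. a \<in> \<Sigma> \<and> (\<forall>m. (e, e) \<in> rn I (TL a m)) \<and>
            (\<forall>b \<in> \<Sigma>. b \<noteq> a \<longrightarrow> (\<forall>m. (e, e) \<notin> rn I (TL b m))) \<and> (e, e) \<notin> rn I X))"

definition C_fr :: "'a set \<Rightarrow> ('d, 'c, 'a tl) interp \<Rightarrow> 'd set" where
  "C_fr \<Sigma> I = AllL I Xstar
     (\<Union>a \<in> \<Sigma>. (\<Inter>m. SelfC I (TL a m)) \<inter>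
               (\<Inter>b \<in> \<Sigma> - {a}. \<Inter>m. dom I - SelfC I (TL b m)) \<inter> (dom I - SelfC I X))"

definition C_A :: "'a set \<Rightarrow> 'a tl list set \<Rightarrow> 'a tl list set \<Rightarrow> 'c
    \<Rightarrow> ('d, 'c, 'a tl) interp \<Rightarrow> 'd set" where
  "C_A \<Sigma> LtA LtC Acc I = C_fr \<Sigma> I \<inter> AllL I LtA (cn I Acc) \<inter> AllL I LtC (dom I - cn I Acc)"

definition represents :: "'a set \<Rightarrow> ('d, 'c, 'a tl) interp \<Rightarrow> 'd list \<Rightarrow> 'a list \<Rightarrow> bool" where
  "represents \<Sigma> I \<rho> w \<longleftrightarrow> length w = length \<rho> \<and> set w \<subseteq> \<Sigma> \<and>
     (\<forall>i < length \<rho>. \<forall>a \<in> \<Sigma>. w ! i = a \<longleftrightarrow> (\<rho> ! i, \<rho> ! i) \<in> rn I (TL a Cm))"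

definition metaword :: "'a set \<Rightarrow> (nat, 'c, 'a tl) interp \<Rightarrow> nat \<Rightarrow> bool" where
  "metaword \<Sigma> I d \<longleftrightarrow> interp_wf I \<and> d \<in> dom I \<and> friendly \<Sigma> I d \<and>
     (\<exists>n > 0. dom I = {0..<n} \<and> rn I X = {(i, Suc i) | i. Suc i < n} \<and>
        (\<forall>r. r \<noteq> X \<longrightarrow> rn I r \<subseteq> {(i, i) | i. i < n}))"

end

(* On a Sigma-friendly x*-path rho the letters of the represented word w sit as self-loops on
   the elements of rho.  Visiting every element of rho twice therefore yields a path labelled
   by the tilde word a1 x a2 x ... x an of w, so d reaches the end of rho along L(tilde A_l)
   when w is in L(A_l) and along L(tilde C_l) otherwise, and C_A forces Acc accordingly.
   Conversely, in a metaword a path labelled by such a tilde word can only move right on x and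
   stay put on the other letters, so it ends at position d + n - 1 after reading exactly the
   represented word.  An element reachable along both L(tilde A_l) and L(tilde C_l) would then
   represent a word of L(A_l) and of its complement; hence interpreting Acc as the set of
   L(tilde A_l)-reachable elements satisfies C_A. *)

theory Submission
  imports Defs
begin

definition x_interleave :: "'a tl list \<Rightarrow> 'a tl list" where
  "x_interleave as = map (\<lambda>j. if even j then as ! (j div 2) else X) [0..<2 * length as - 1]"

lemma concat_sep_eq_map:
  assumes "as \<noteq> []"
  shows "concat (map (\<lambda>i. if i = 0 then [as ! i] else [s, as ! i]) [0..<length as])
       = map (\<lambda>j. if even j then as ! (j div 2) else s) [0..<2 * length as - 1]"
  using assms
proof (induction as rule: rev_induct)
  case Nil
  then show ?case by simp
next
  case (snoc b as)
  show ?case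
  proof (cases "as = []")
    case True
    then show ?thesis by simp
  next
    case False
    let ?n = "length as"
    have prefix: "map (\<lambda>i. if i = 0 then [(as @ [b]) ! i] else [s, (as @ [b]) ! i]) [0..<?n]
        = map (\<lambda>i. if i = 0 then [as ! i] else [s, as ! i]) [0..<?n]"
      by (auto simp: nth_append)
    have suffix: "map (\<lambda>j. if even j then (as @ [b]) ! (j div 2) else s) [0..<2 * ?n - 1]
        = map (\<lambda>j. if even j then as ! (j div 2) else s) [0..<2 * ?n - 1]"
      by (auto simp: nth_append)
    have "concat (map (\<lambda>i. if i = 0 then [(as @ [b]) ! i] else [s, (as @ [b]) ! i]) [0..<Suc ?n])
        = concat (map (\<lambda>i. if i = 0 then [as ! i] else [s, as ! i]) [0..<?n]) @ [s, b]"
      using False by (simp only: upt_Suc_append[OF le0] map_append concat_append prefix) simp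
    also have "\<dots> = map (\<lambda>j. if even j then as ! (j div 2) else s) [0..<2 * ?n - 1] @ [s, b]"
      using snoc.IH[OF False] by simp
    also have "\<dots> = map (\<lambda>j. if even j then (as @ [b]) ! (j div 2) else s) [0..<Suc (Suc (2 * ?n - 1))]"
      using False by (simp only: upt_Suc_append[OF le0] map_append suffix) (simp add: nth_append)
    finally show ?thesis
      using False by simp
  qed
qed

lemma xform_iff:
  "xform \<Sigma> w as \<longleftrightarrow>
     as \<noteq> [] \<and> (\<forall>t \<in> set as. \<exists>a m. a \<in> \<Sigma> \<and> t = TL a m) \<and> w = x_interleave as"
  unfolding xform_def x_interleave_def by (auto simp: concat_sep_eq_map)

lemma length_x_interleave [simp]: "length (x_interleave as) = 2 * length as - 1"
  by (simp add: x_interleave_def)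

lemma nth_x_interleave:
  "j < 2 * length as - 1 \<Longrightarrow> x_interleave as ! j = (if even j then as ! (j div 2) else X)"
  by (simp add: x_interleave_def)

lemma L_reach_in_dom: "L_reach I L d e \<Longrightarrow> d \<in> dom I \<and> e \<in> dom I"
  unfolding L_reach_def L_path_def by (auto dest: hd_in_set last_in_set)

lemma mem_AllL_iff: "d \<in> AllL I L C \<longleftrightarrow> d \<in> dom I \<and> (\<forall>e. L_reach I L d e \<longrightarrow> e \<in> C)"
  unfolding AllL_def ExL_def by (auto dest: L_reach_in_dom)

lemma L_reach_cn_update [simp]: "L_reach (I\<lparr>cn := c\<rparr>) L = L_reach I L"
  unfolding L_reach_def L_path_def by simp

lemma AllL_cn_update [simp]: "AllL (I\<lparr>cn := c\<rparr>) L C = AllL I L C"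
  unfolding AllL_def ExL_def by simp

lemma C_fr_cn_update [simp]: "C_fr \<Sigma> (I\<lparr>cn := c\<rparr>) = C_fr \<Sigma> I"
  unfolding C_fr_def SelfC_def by simp

lemma replicate_X_in_Xstar: "replicate k X \<in> Xstar"
  unfolding Xstar_def by blast

lemma L_path_Xstar_iff:
  "L_path I Xstar \<rho> \<longleftrightarrow>
     \<rho> \<noteq> [] \<and> set \<rho> \<subseteq> dom I \<and> (\<forall>i. Suc i < length \<rho> \<longrightarrow> (\<rho> ! i, \<rho> ! Suc i) \<in> rn I X)"
    (is "_ \<longleftrightarrow> ?rhs")
proof
  assume "L_path I Xstar \<rho>"
  then obtain w where "\<rho> \<noteq> []" and "set \<rho> \<subseteq> dom I" and "w \<in> Xstar"
      and "length \<rho> = length w + 1" and "\<forall>i < length w. (\<rho> ! i, \<rho> ! Suc i) \<in> rn I (w ! i)"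
    unfolding L_path_def by blast
  moreover from \<open>w \<in> Xstar\<close> obtain k where "w = replicate k X"
    unfolding Xstar_def by blast
  ultimately show ?rhs
    by simp
next
  assume ?rhs
  then show "L_path I Xstar \<rho>"
    unfolding L_path_def
    by (intro conjI bexI[OF _ replicate_X_in_Xstar[of "length \<rho> - 1"]]) auto
qed

lemma L_reach_Xstar_nth:
  assumes "L_path I Xstar \<rho>" and "i < length \<rho>"
  shows "L_reach I Xstar (hd \<rho>) (\<rho> ! i)"
proof -
  have "set (take (Suc i) \<rho>) \<subseteq> dom I"
    using assms(1) set_take_subset[of "Suc i" \<rho>] unfolding L_path_Xstar_iff by blast
  then have "L_path I Xstar (take (Suc i) \<rho>)"
    using assms unfolding L_path_Xstar_iff by simp
  moreover have "hd (take (Suc i) \<rho>) = hd \<rho>" and "last (take (Suc i) \<rho>) = \<rho> ! i"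
    using assms by (simp_all add: L_path_Xstar_iff last_conv_nth)
  ultimately show ?thesis
    unfolding L_reach_def by blast
qed

definition self_label :: "'a set \<Rightarrow> ('d, 'c, 'a tl) interp \<Rightarrow> 'd \<Rightarrow> 'a \<Rightarrow> bool" where
  "self_label \<Sigma> I e a \<longleftrightarrow> a \<in> \<Sigma> \<and> (\<forall>m. (e, e) \<in> rn I (TL a m)) \<and>
     (\<forall>b \<in> \<Sigma>. b \<noteq> a \<longrightarrow> (\<forall>m. (e, e) \<notin> rn I (TL b m))) \<and> (e, e) \<notin> rn I X"

lemma self_label_determined:
  "self_label \<Sigma> I e a \<Longrightarrow> b \<in> \<Sigma> \<Longrightarrow> (e, e) \<in> rn I (TL b m) \<Longrightarrow> b = a"
  unfolding self_label_def by auto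

lemma self_label_unique:
  assumes "self_label \<Sigma> I e a" and "self_label \<Sigma> I e b"
  shows "a = b"
  using self_label_determined[OF assms(1), of b Cm] assms(2) unfolding self_label_def by auto

lemma friendly_iff_self_label:
  "friendly \<Sigma> I d \<longleftrightarrow> (\<forall>e. L_reach I Xstar d e \<longrightarrow> (\<exists>a. self_label \<Sigma> I e a))"
proof -
  have ex1_iff: "(\<exists>!a. self_label \<Sigma> I e a) \<longleftrightarrow> (\<exists>a. self_label \<Sigma> I e a)" for e
    by (metis self_label_unique)
  then show ?thesis
    unfolding friendly_def self_label_def[symmetric] by (simp only: ex1_iff)
qed

lemma C_fr_eq_AllL_self_label:
  "C_fr \<Sigma> I = AllL I Xstar {e \<in> dom I. \<exists>a. self_label \<Sigma> I e a}"
proof -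
  have "(\<Union>a \<in> \<Sigma>. (\<Inter>m. SelfC I (TL a m)) \<inter>
          (\<Inter>b \<in> \<Sigma> - {a}. \<Inter>m. dom I - SelfC I (TL b m)) \<inter> (dom I - SelfC I X))
        = {e \<in> dom I. \<exists>a. self_label \<Sigma> I e a}"
    unfolding set_eq_iff UN_iff INT_iff Int_iff Diff_iff SelfC_def mem_Collect_eq self_label_def
    by auto
  then show ?thesis
    unfolding C_fr_def by simp
qed

lemma in_C_fr_iff_friendly:
  assumes "d \<in> dom I"
  shows "d \<in> C_fr \<Sigma> I \<longleftrightarrow> friendly \<Sigma> I d"
  unfolding C_fr_eq_AllL_self_label mem_AllL_iff friendly_iff_self_label
  using assms by (auto dest: L_reach_in_dom)

lemma L_reach_stutter:
  assumes path: "L_path I Xstar \<rho>" and len: "length as = length \<rho>"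
    and loops: "\<forall>i < length \<rho>. (\<rho> ! i, \<rho> ! i) \<in> rn I (as ! i)"
    and word: "x_interleave as \<in> L"
  shows "L_reach I L (hd \<rho>) (last \<rho>)"
proof -
  define \<rho>' where "\<rho>' = map (\<lambda>j. \<rho> ! (j div 2)) [0..<2 * length \<rho>]"
  have ne: "\<rho> \<noteq> []" and sub: "set \<rho> \<subseteq> dom I"
    and steps: "\<And>i. Suc i < length \<rho> \<Longrightarrow> (\<rho> ! i, \<rho> ! Suc i) \<in> rn I X"
    using path unfolding L_path_Xstar_iff by auto
  have half: "(2 * length \<rho> - 1) div 2 = length \<rho> - 1"
    by simp
  have nth_\<rho>': "\<rho>' ! k = \<rho> ! (k div 2)" if "k < 2 * length \<rho>" for k
    using that by (simp add: \<rho>'_def del: upt_Suc)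
  have "(\<rho>' ! j, \<rho>' ! Suc j) \<in> rn I (x_interleave as ! j)" if j: "j < 2 * length \<rho> - 1" for j
  proof (cases "even j")
    case True
    then have "Suc j div 2 = j div 2"
      by presburger
    then show ?thesis
      using j True loops len by (simp add: nth_\<rho>' nth_x_interleave)
  next
    case False
    then have "Suc j div 2 = Suc (j div 2)"
      by presburger
    moreover have "Suc (j div 2) < length \<rho>"
      using j False by presburger
    ultimately show ?thesis
      using j False steps len by (simp add: nth_\<rho>' nth_x_interleave)
  qed
  moreover have "set \<rho>' \<subseteq> dom I"
    using sub by (auto simp: \<rho>'_def)
  moreover have "length \<rho>' = length (x_interleave as) + 1"
    using ne len by (simp add: \<rho>'_def)
  ultimately have "L_path I L \<rho>'"
    unfolding L_path_def using len by (intro conjI bexI[OF _ word]) auto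
  moreover have "hd \<rho>' = hd \<rho>" and "last \<rho>' = last \<rho>"
    using ne half by (simp_all add: \<rho>'_def hd_conv_nth last_conv_nth)
  ultimately show ?thesis
    unfolding L_reach_def by blast
qed

lemma represents_self_loops:
  assumes "friendly \<Sigma> I (hd \<rho>)" and "L_path I Xstar \<rho>" and "represents \<Sigma> I \<rho> w"
    and "i < length \<rho>"
  shows "(\<rho> ! i, \<rho> ! i) \<in> rn I (TL (w ! i) m)"
proof -
  obtain a where a: "self_label \<Sigma> I (\<rho> ! i) a"
    using assms(1,2,4) L_reach_Xstar_nth unfolding friendly_iff_self_label by blast
  then have "(\<rho> ! i, \<rho> ! i) \<in> rn I (TL a Cm)" and "a \<in> \<Sigma>"
    unfolding self_label_def by auto
  then have "w ! i = a"
    using assms(3,4) unfolding represents_def by blast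
  with a show ?thesis
    unfolding self_label_def by blast
qed

lemma AllL_tilde_represents_last:
  assumes tilde: "is_tilde \<Sigma> L V" and all: "d \<in> AllL I (vpa_lang (tSigma \<Sigma>) V) C"
    and fr: "friendly \<Sigma> I d" and path: "L_path I Xstar \<rho>" and hd: "hd \<rho> = d"
    and rep: "represents \<Sigma> I \<rho> w" and "w \<in> L"
  shows "last \<rho> \<in> C"
proof -
  have len: "length w = length \<rho>" and "\<rho> \<noteq> []"
    using rep path unfolding represents_def L_path_def by auto
  then have "w \<in> L - {[]}"
    using \<open>w \<in> L\<close> by auto
  then obtain as w' where w: "w = map p1 as" and w': "w' \<in> vpa_lang (tSigma \<Sigma>) V"
      and "xform \<Sigma> w' as"
    using tilde unfolding is_tilde_def by blast
  then have "w' = x_interleave as" and letters: "\<forall>t \<in> set as. \<exists>a m. t = TL a m"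
    unfolding xform_iff by auto
  have len_as: "length as = length \<rho>"
    using len w by simp
  have "\<forall>i < length \<rho>. (\<rho> ! i, \<rho> ! i) \<in> rn I (as ! i)"
  proof (intro allI impI)
    fix i assume i: "i < length \<rho>"
    then have "as ! i \<in> set as"
      using len_as by simp
    then obtain a m where a: "as ! i = TL a m"
      using letters by blast
    then have "w ! i = a"
      using i len_as w by simp
    with a show "(\<rho> ! i, \<rho> ! i) \<in> rn I (as ! i)"
      using represents_self_loops[OF _ path rep i] fr hd by simp
  qed
  then have "L_reach I (vpa_lang (tSigma \<Sigma>) V) (hd \<rho>) (last \<rho>)"
    using L_reach_stutter[OF path len_as] w' \<open>w' = x_interleave as\<close> by blast
  then show ?thesis
    using all hd unfolding mem_AllL_iff by blast
qed

lemma C_A_friendly: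
  assumes "d \<in> C_A \<Sigma> LA LC Acc I"
  shows "friendly \<Sigma> I d"
proof -
  have "d \<in> C_fr \<Sigma> I"
    using assms unfolding C_A_def by blast
  moreover from this have "d \<in> dom I"
    unfolding C_fr_def mem_AllL_iff by blast
  ultimately show ?thesis
    by (simp add: in_C_fr_iff_friendly)
qed

lemma C_A_represents_iff:
  assumes tilde_A: "is_tilde \<Sigma> L VA" and tilde_C: "is_tilde \<Sigma> (lists \<Sigma> - L) VC"
    and C_A: "d \<in> C_A \<Sigma> (vpa_lang (tSigma \<Sigma>) VA) (vpa_lang (tSigma \<Sigma>) VC) Acc I"
    and path: "L_path I Xstar \<rho>" and hd: "hd \<rho> = d" and rep: "represents \<Sigma> I \<rho> w"
  shows "last \<rho> \<in> cn I Acc \<longleftrightarrow> w \<in> L"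
proof
  have fr: "friendly \<Sigma> I d"
    using C_A by (rule C_A_friendly)
  have all_A: "d \<in> AllL I (vpa_lang (tSigma \<Sigma>) VA) (cn I Acc)"
    and all_C: "d \<in> AllL I (vpa_lang (tSigma \<Sigma>) VC) (dom I - cn I Acc)"
    using C_A unfolding C_A_def by auto
  show "last \<rho> \<in> cn I Acc" if "w \<in> L"
    using AllL_tilde_represents_last[OF tilde_A all_A fr path hd rep that] .
  show "w \<in> L" if "last \<rho> \<in> cn I Acc"
  proof (rule ccontr)
    assume "w \<notin> L"
    moreover have "w \<in> lists \<Sigma>"
      using rep unfolding represents_def by auto
    ultimately have "last \<rho> \<in> dom I - cn I Acc"
      using AllL_tilde_represents_last[OF tilde_C all_C fr path hd rep] by blast
    with that show False
      by blast
  qed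
qed

lemma metaword_reach_Xstar:
  assumes "metaword \<Sigma> I d" and "e \<in> dom I" and "d \<le> e"
  shows "L_reach I Xstar d e"
proof -
  obtain n where dom: "dom I = {0..<n}" and X: "rn I X = {(i, Suc i) | i. Suc i < n}"
    using assms(1) unfolding metaword_def by blast
  have "L_path I Xstar [d..<Suc e]"
    using assms(2,3) unfolding L_path_Xstar_iff dom X by (auto simp: nth_upt simp del: upt_Suc)
  moreover have "hd [d..<Suc e] = d" and "last [d..<Suc e] = e"
    using assms(3) by (simp_all del: upt_Suc)
  ultimately show ?thesis
    unfolding L_reach_def by blast
qed

lemma metaword_interleave_path_nth:
  assumes mw: "metaword \<Sigma> I d" and "X \<notin> set as" and len: "length \<rho> = 2 * length as"
    and start: "\<rho> ! 0 = d"
    and steps: "\<forall>j < length (x_interleave as). (\<rho> ! j, \<rho> ! Suc j) \<in> rn I (x_interleave as ! j)"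
  shows "j < length \<rho> \<Longrightarrow> \<rho> ! j = d + j div 2"
proof (induction j)
  case 0
  then show ?case
    using start by simp
next
  case (Suc j)
  obtain n where X: "rn I X = {(i, Suc i) | i. Suc i < n}"
    and diag: "\<forall>r. r \<noteq> X \<longrightarrow> rn I r \<subseteq> {(i, i) | i. i < n}"
    using mw unfolding metaword_def by blast
  have j: "j < length (x_interleave as)"
    using Suc.prems len by simp
  then have step: "(\<rho> ! j, \<rho> ! Suc j) \<in> rn I (x_interleave as ! j)"
    using steps by blast
  show ?case
  proof (cases "even j")
    case True
    then have "x_interleave as ! j \<in> set as"
      using j by (simp add: nth_x_interleave)
    then have "x_interleave as ! j \<noteq> X"
      using \<open>X \<notin> set as\<close> by auto
    then have "\<rho> ! Suc j = \<rho> ! j"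
      using step diag by blast
    moreover have "Suc j div 2 = j div 2"
      using True by presburger
    ultimately show ?thesis
      using Suc by simp
  next
    case False
    then have "\<rho> ! Suc j = Suc (\<rho> ! j)"
      using step j X by (auto simp: nth_x_interleave)
    moreover have "Suc j div 2 = Suc (j div 2)"
      using False by presburger
    ultimately show ?thesis
      using Suc by simp
  qed
qed

lemma metaword_self_label:
  assumes "metaword \<Sigma> I d" and "e \<in> dom I" and "d \<le> e"
  obtains a where "self_label \<Sigma> I e a"
proof -
  have "friendly \<Sigma> I d"
    using assms(1) unfolding metaword_def by blast
  moreover have "L_reach I Xstar d e"
    using metaword_reach_Xstar[OF assms] .
  ultimately show ?thesis
    using that unfolding friendly_iff_self_label by blast
qed

lemma metaword_interleave_path:
  assumes mw: "metaword \<Sigma> I d" and "X \<notin> set as" and "as \<noteq> []"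
    and path: "L_path I {x_interleave as} \<rho>" and hd: "hd \<rho> = d"
  shows "d + length as = Suc (last \<rho>)"
    and "i < length as \<Longrightarrow> d + i \<in> dom I \<and> (d + i, d + i) \<in> rn I (as ! i)"
proof -
  obtain k where k: "length as = Suc k"
    using \<open>as \<noteq> []\<close> by (cases as) simp_all
  have "\<rho> \<noteq> []" and sub: "set \<rho> \<subseteq> dom I" and len: "length \<rho> = 2 * length as"
    and steps: "\<forall>j < length (x_interleave as). (\<rho> ! j, \<rho> ! Suc j) \<in> rn I (x_interleave as ! j)"
    using path k unfolding L_path_def by auto
  then have nth: "\<rho> ! j = d + j div 2" if "j < length \<rho>" for j
    using metaword_interleave_path_nth[OF mw \<open>X \<notin> set as\<close> len _ steps that] hd
    by (simp add: hd_conv_nth)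
  show "d + length as = Suc (last \<rho>)"
    using nth[of "length \<rho> - 1"] len k \<open>\<rho> \<noteq> []\<close> by (simp add: last_conv_nth)
  assume i: "i < length as"
  then have "2 * i < length (x_interleave as)"
    by simp
  then have "(\<rho> ! (2 * i), \<rho> ! Suc (2 * i)) \<in> rn I (x_interleave as ! (2 * i))"
    using steps by blast
  then have "(\<rho> ! (2 * i), \<rho> ! Suc (2 * i)) \<in> rn I (as ! i)"
    using i by (simp add: nth_x_interleave)
  moreover have "\<rho> ! (2 * i) \<in> set \<rho>"
    using i len by simp
  ultimately show "d + i \<in> dom I \<and> (d + i, d + i) \<in> rn I (as ! i)"
    using nth[of "2 * i"] nth[of "Suc (2 * i)"] i len sub by auto
qed

lemma metaword_tilde_reach:
  assumes mw: "metaword \<Sigma> I d" and tilde: "is_tilde \<Sigma> L V"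
    and reach: "L_reach I (vpa_lang (tSigma \<Sigma>) V) d e"
  obtains u where "u \<in> L" and "d + length u = Suc e"
    and "\<forall>i < length u. self_label \<Sigma> I (d + i) (u ! i)"
proof -
  obtain \<rho> w where w: "w \<in> vpa_lang (tSigma \<Sigma>) V" and path: "L_path I {w} \<rho>"
      and hd: "hd \<rho> = d" and last: "last \<rho> = e"
    using reach unfolding L_reach_def L_path_def by blast
  then obtain as where xform: "xform \<Sigma> w as"
    using tilde unfolding is_tilde_def by blast
  then have "as \<noteq> []" and letters: "\<forall>t \<in> set as. \<exists>a m. a \<in> \<Sigma> \<and> t = TL a m"
    and w_eq: "w = x_interleave as"
    unfolding xform_iff by auto
  then have "X \<notin> set as"
    by auto
  note as_path = metaword_interleave_path[OF mw this \<open>as \<noteq> []\<close> path[unfolded w_eq] hd]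
  have "self_label \<Sigma> I (d + i) (p1 (as ! i))" if i: "i < length as" for i
  proof -
    obtain a m where a: "a \<in> \<Sigma>" and as_i: "as ! i = TL a m"
      using letters i by (meson nth_mem)
    obtain b where b: "self_label \<Sigma> I (d + i) b"
      using metaword_self_label[OF mw _ le_add1] as_path(2)[OF i] by blast
    have "a = b"
      using self_label_determined[OF b a, of m] as_path(2)[OF i] as_i by simp
    then show ?thesis
      using b as_i by simp
  qed
  moreover have "L - {[]} = {map p1 as | as w. w \<in> vpa_lang (tSigma \<Sigma>) V \<and> xform \<Sigma> w as}"
    using tilde unfolding is_tilde_def by (elim conjE)
  then have "map p1 as \<in> L"
    using w xform by blast
  ultimately show ?thesis
    using that[of "map p1 as"] as_path(1) last by simp
qed

lemma metaword_tilde_reach_disjoint: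
  assumes mw: "metaword \<Sigma> I d" and tilde_A: "is_tilde \<Sigma> L VA" and tilde_C: "is_tilde \<Sigma> L' VC"
    and disjoint: "L \<inter> L' = {}"
    and reach_A: "L_reach I (vpa_lang (tSigma \<Sigma>) VA) d e"
    and reach_C: "L_reach I (vpa_lang (tSigma \<Sigma>) VC) d e"
  shows False
proof -
  obtain u where "u \<in> L" and len_u: "d + length u = Suc e"
      and u: "\<forall>i < length u. self_label \<Sigma> I (d + i) (u ! i)"
    using metaword_tilde_reach[OF mw tilde_A reach_A] by blast
  obtain v where "v \<in> L'" and len_v: "d + length v = Suc e"
      and v: "\<forall>i < length v. self_label \<Sigma> I (d + i) (v ! i)"
    using metaword_tilde_reach[OF mw tilde_C reach_C] by blast
  have same_length: "length u = length v"
    using len_u len_v by simp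
  have "u = v"
  proof (rule nth_equalityI)
    fix i assume "i < length u"
    then show "u ! i = v ! i"
      using self_label_unique[of \<Sigma> I "d + i"] u v same_length by simp
  qed (rule same_length)
  with \<open>u \<in> L\<close> \<open>v \<in> L'\<close> disjoint show False
    by blast
qed

lemma metaword_C_A:
  assumes mw: "metaword \<Sigma> I d" and tilde_A: "is_tilde \<Sigma> L VA" and tilde_C: "is_tilde \<Sigma> L' VC"
    and disjoint: "L \<inter> L' = {}"
  shows "\<exists>S \<subseteq> dom I. d \<in> C_A \<Sigma> (vpa_lang (tSigma \<Sigma>) VA) (vpa_lang (tSigma \<Sigma>) VC) Acc
                          (I\<lparr>cn := (cn I)(Acc := S)\<rparr>)"
proof -
  define S where "S = {e. L_reach I (vpa_lang (tSigma \<Sigma>) VA) d e}"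
  have dom: "d \<in> dom I" and fr: "friendly \<Sigma> I d"
    using mw unfolding metaword_def by auto
  have "S \<subseteq> dom I"
    unfolding S_def by (auto dest: L_reach_in_dom)
  moreover have "d \<in> C_fr \<Sigma> I"
    using dom fr by (simp add: in_C_fr_iff_friendly)
  moreover have "d \<in> AllL I (vpa_lang (tSigma \<Sigma>) VA) S"
    unfolding mem_AllL_iff S_def using dom by blast
  moreover have "d \<in> AllL I (vpa_lang (tSigma \<Sigma>) VC) (dom I - S)"
    unfolding mem_AllL_iff
  proof (intro conjI allI impI dom)
    fix e assume reach_C: "L_reach I (vpa_lang (tSigma \<Sigma>) VC) d e"
    then show "e \<in> dom I - S"
      using L_reach_in_dom[OF reach_C] metaword_tilde_reach_disjoint[OF mw tilde_A tilde_C disjoint]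
      unfolding S_def by blast
  qed
  ultimately show ?thesis
    unfolding C_A_def by auto
qed

theorem lemma3p3:
  fixes \<Sigma> :: "'a set"
    and A :: "('q, 'a) doca" and Cc :: "('p, 'a) doca"
    and VA :: "('q1, 'g1, 'a tl) vpa"
    and VC :: "('q2, 'g2, 'a tl) vpa"
    and Acc :: 'c
  assumes "finite \<Sigma>"
    and "doca_wf \<Sigma> A" and "doca_wf \<Sigma> Cc"
    and "doca_lang \<Sigma> Cc = lists \<Sigma> - doca_lang \<Sigma> A"
    and "is_tilde \<Sigma> (doca_lang \<Sigma> A) VA"
    and "is_tilde \<Sigma> (doca_lang \<Sigma> Cc) VC"
  shows "(\<forall>(I :: ('d, 'c, 'a tl) interp) d.
            interp_wf I \<and> d \<in> C_A \<Sigma> (vpa_lang (tSigma \<Sigma>) VA) (vpa_lang (tSigma \<Sigma>) VC) Acc I \<longrightarrow>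
              friendly \<Sigma> I d \<and>
              (\<forall>\<rho> w. L_path I Xstar \<rho> \<and> hd \<rho> = d \<and> represents \<Sigma> I \<rho> w \<longrightarrow>
                 (last \<rho> \<in> cn I Acc \<longleftrightarrow> w \<in> doca_lang \<Sigma> A)))
       \<and> (\<forall>(I :: (nat, 'c, 'a tl) interp) d. metaword \<Sigma> I d \<longrightarrow>
            (\<exists>S \<subseteq> dom I. d \<in> C_A \<Sigma> (vpa_lang (tSigma \<Sigma>) VA) (vpa_lang (tSigma \<Sigma>) VC) Acc
                                 (I\<lparr>cn := (cn I)(Acc := S)\<rparr>)))"
proof -
  have tilde_C: "is_tilde \<Sigma> (lists \<Sigma> - doca_lang \<Sigma> A) VC"
    using assms(4,6) by simp
  show ?thesis
  proof (rule conjI; intro allI impI)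
    fix I :: "('d, 'c, 'a tl) interp" and d
    assume "interp_wf I \<and> d \<in> C_A \<Sigma> (vpa_lang (tSigma \<Sigma>) VA) (vpa_lang (tSigma \<Sigma>) VC) Acc I"
    then have C_A: "d \<in> C_A \<Sigma> (vpa_lang (tSigma \<Sigma>) VA) (vpa_lang (tSigma \<Sigma>) VC) Acc I"
      by blast
    show "friendly \<Sigma> I d \<and>
        (\<forall>\<rho> w. L_path I Xstar \<rho> \<and> hd \<rho> = d \<and> represents \<Sigma> I \<rho> w \<longrightarrow>
           (last \<rho> \<in> cn I Acc \<longleftrightarrow> w \<in> doca_lang \<Sigma> A))"
      using C_A_friendly[OF C_A] C_A_represents_iff[OF assms(5) tilde_C C_A] by blast
  next
    fix I :: "(nat, 'c, 'a tl) interp" and d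
    assume mw: "metaword \<Sigma> I d"
    show "\<exists>S \<subseteq> dom I. d \<in> C_A \<Sigma> (vpa_lang (tSigma \<Sigma>) VA) (vpa_lang (tSigma \<Sigma>) VC) Acc
                              (I\<lparr>cn := (cn I)(Acc := S)\<rparr>)"
      using metaword_C_A[OF mw assms(5) tilde_C] by blast
  qed
qed

end
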